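(* Let $\Phi\colon\mathbb X\rightrightarrows\mathbb Y$ have closed graph, $(\bar x,\bar y)\in\operatorname{gph}\Phi$, $u\in\mathbb S_{\mathbb X}$, $\gamma>1$, and assume $\ker D^*_\gamma\Phi((\bar x,\bar y);(u,0))=\{0\}$. If for all $\alpha,\beta\ge0$ \[\widetilde D^*_\gamma\Phi((\bar x,\bar y);(u,0))(0)\cup\bigcup_{v\in\mathbb S_{\mathbb Y}}D^*_\gamma\Phi((\bar x,\bar y);(u,\alpha v))(\beta v)\subset\operatorname{Im}D^*\Phi(\bar x,\bar y),\] in particular if $\operatorname{Im}\widetilde D^*_\gamma\Phi((\bar x,\bar y);(u,0))\subset\operatorname{Im}D^*\Phi(\bar x,\bar y)$, then $\Phi$ is asymptotically regular at $(\bar x,\bar y)$ in direction $u$.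
   Context: $\widehat D^*,D^*$ regular and limiting coderivatives; $\ker\Psi=\{y^*\mid0\in\Psi(y^* )\}$, $\operatorname{Im}\Psi=\bigcup_{y^*}\Psi(y^* )$. Pseudo-coderivative of order $\gamma$ in direction $(u,v)\in\mathbb S_{\mathbb X}\times\mathbb Y$: $x^*\in D^*_\gamma\Phi((\bar x,\bar y);(u,v))(y^* )$ iff there are $u_k\to u$, $v_k\to v$, $x_k^*\to x^*$, $y_k^*\to y^*$, $t_k\searrow0$ with $(t_k\|u_k\|)^{\gamma-1}x_k^*\in\widehat D^*\Phi(\bar x+t_ku_k,\bar y+(t_k\|u_k\|)^\gamma v_k)(y_k^* )$. Gfrerer's pseudo-coderivative $\widetilde D^*_\gamma\Phi((\bar x,\bar y);(u,v))$: same with $\bar y+t_kv_k$ instead. Asymptotic regularity in direction $u$: for all $\{(x_k,y_k)\}\subset\operatorname{gph}\Phi$, $\{x_k^*\}$, $\{\lambda_k\}$, $x^*,y^*$ with $x_k\notin\Phi^{-1}(\bar y)$, $y_k\ne\bar y$, $x_k^*\in\widehat D^*\Phi(x_k,y_k)(\lambda_k)$, $x_k\to\bar x$, $y_k\to\bar y$, $x_k^*\to x^*$, $(x_k-\bar x)/\|x_k-\bar x\|\to u$, $(y_k-\bar y)/\|x_k-\bar x\|\to0$, $\|\lambda_k\|\to\infty$, $(y_k-\bar y)/\|y_k-\bar y\|-\lambda_k/\|\lambda_k\|\to0$, $(\|y_k-\bar y\|/\|x_k-\bar x\|)\lambda_k\to y^*$, one has $x^*\in\operatorname{Im}D^*\Phi(\bar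 x,\bar y)$. *)

theory Defs
  imports "HOL-Analysis.Analysis"
begin

definition gph :: "('a \<Rightarrow> 'b set) \<Rightarrow> ('a \<times> 'b) set" where
  "gph Phi = {(x, y). y \<in> Phi x}"

text \<open>Regular (Frechet) normal cone: z* with limsup_{z' -> z, z' in Omega}
  <z*, z' - z> / |z' - z| <= 0 (written out with epsilon-delta).\<close>
definition reg_normal :: "('a::real_inner) set \<Rightarrow> 'a \<Rightarrow> 'a set" where
  "reg_normal Omega z = {v. z \<in> Omega \<and>
     (\<forall>e>0. \<exists>d>0. \<forall>z'\<in>Omega. norm (z' - z) < d \<longrightarrow> inner v (z' - z) \<le> e * norm (z' - z))}"

definition reg_coderiv :: "('a::euclidean_space \<Rightarrow> 'b::euclidean_space set) \<Rightarrow> 'a \<Rightarrow> 'b \<Rightarrow> 'b \<Rightarrow> 'a set" where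
  "reg_coderiv Phi x y ystar = {xstar. (xstar, - ystar) \<in> reg_normal (gph Phi) (x, y)}"

definition lim_coderiv :: "('a::euclidean_space \<Rightarrow> 'b::euclidean_space set) \<Rightarrow> 'a \<Rightarrow> 'b \<Rightarrow> 'b \<Rightarrow> 'a set" where
  "lim_coderiv Phi xb yb ystar = {xstar. \<exists>xs ys xss yss.
     (\<forall>k. (xs k, ys k) \<in> gph Phi \<and> xss k \<in> reg_coderiv Phi (xs k) (ys k) (yss k)) \<and>
     xs \<longlonglongrightarrow> xb \<and> ys \<longlonglongrightarrow> yb \<and> xss \<longlonglongrightarrow> xstar \<and> yss \<longlonglongrightarrow> ystar}"

definition pcoderiv :: "real \<Rightarrow> ('a::euclidean_space \<Rightarrow> 'b::euclidean_space set) \<Rightarrow> 'a \<Rightarrow> 'b \<Rightarrow> 'a \<Rightarrow> 'b \<Rightarrow> 'b \<Rightarrow> 'a set" where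
  "pcoderiv gam Phi xb yb u v ystar = {xstar. \<exists>uk vk xk yk t.
     uk \<longlonglongrightarrow> u \<and> vk \<longlonglongrightarrow> v \<and> xk \<longlonglongrightarrow> xstar \<and> yk \<longlonglongrightarrow> ystar \<and>
     (\<forall>k. t k > 0) \<and> t \<longlonglongrightarrow> 0 \<and>
     (\<forall>k. ((t k * norm (uk k)) powr (gam - 1)) *\<^sub>R xk k \<in>
        reg_coderiv Phi (xb + t k *\<^sub>R uk k) (yb + ((t k * norm (uk k)) powr gam) *\<^sub>R vk k) (yk k))}"

definition gpcoderiv :: "real \<Rightarrow> ('a::euclidean_space \<Rightarrow> 'b::euclidean_space set) \<Rightarrow> 'a \<Rightarrow> 'b \<Rightarrow> 'a \<Rightarrow> 'b \<Rightarrow> 'b \<Rightarrow> 'a set" where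
  "gpcoderiv gam Phi xb yb u v ystar = {xstar. \<exists>uk vk xk yk t.
     uk \<longlonglongrightarrow> u \<and> vk \<longlonglongrightarrow> v \<and> xk \<longlonglongrightarrow> xstar \<and> yk \<longlonglongrightarrow> ystar \<and>
     (\<forall>k. t k > 0) \<and> t \<longlonglongrightarrow> 0 \<and>
     (\<forall>k. ((t k * norm (uk k)) powr (gam - 1)) *\<^sub>R xk k \<in>
        reg_coderiv Phi (xb + t k *\<^sub>R uk k) (yb + t k *\<^sub>R vk k) (yk k))}"

definition ker_sv :: "('b::zero \<Rightarrow> 'a::zero set) \<Rightarrow> 'b set" where
  "ker_sv Psi = {ystar. 0 \<in> Psi ystar}"

definition Im_sv :: "('b \<Rightarrow> 'a set) \<Rightarrow> 'a set" where
  "Im_sv Psi = (\<Union>ystar. Psi ystar)"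

definition asymp_regular :: "('a::euclidean_space \<Rightarrow> 'b::euclidean_space set) \<Rightarrow> 'a \<Rightarrow> 'b \<Rightarrow> 'a \<Rightarrow> bool" where
  "asymp_regular Phi xb yb u \<longleftrightarrow>
     (\<forall>(xs :: nat \<Rightarrow> 'a) (ys :: nat \<Rightarrow> 'b) (xss :: nat \<Rightarrow> 'a) (lam :: nat \<Rightarrow> 'b) xstar ystar.
       ((\<forall>k. (xs k, ys k) \<in> gph Phi \<and> yb \<notin> Phi (xs k) \<and> ys k \<noteq> yb \<and>
             xss k \<in> reg_coderiv Phi (xs k) (ys k) (lam k)) \<and>
        xs \<longlonglongrightarrow> xb \<and> ys \<longlonglongrightarrow> yb \<and> xss \<longlonglongrightarrow> xstar \<and>
        (\<lambda>k. (1 / norm (xs k - xb)) *\<^sub>R (xs k - xb)) \<longlonglongrightarrow> u \<and>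
        (\<lambda>k. (1 / norm (xs k - xb)) *\<^sub>R (ys k - yb)) \<longlonglongrightarrow> 0 \<and>
        filterlim (\<lambda>k. norm (lam k)) at_top sequentially \<and>
        (\<lambda>k. (1 / norm (ys k - yb)) *\<^sub>R (ys k - yb) - (1 / norm (lam k)) *\<^sub>R lam k) \<longlonglongrightarrow> 0 \<and>
        (\<lambda>k. (norm (ys k - yb) / norm (xs k - xb)) *\<^sub>R lam k) \<longlonglongrightarrow> ystar)
       \<longrightarrow> xstar \<in> Im_sv (lim_coderiv Phi xb yb))"

end

theory Submission
  imports Defs
begin

(* Let (x_k, y_k, x*_k, lam_k) be a test sequence of asymptotic regularity and t_k = |x_k - xb|.
   Rescaling to the order gam gives t_k^(gam-1) x*_k in D^Phi(x_k, y_k)(F_k) with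
   F_k = t_k^(gam-1) lam_k, and y_k = yb + t_k^gam V_k; the product |V_k| |F_k| equals
   (|y_k - yb| / t_k) |lam_k| and so converges to |y*|.
   If |V_k| -> oo, then F_k -> 0 and x* lies in Gfrerer's pseudo-coderivative in direction (u, 0)
   at 0.  Otherwise, along a subsequence with V_k bounded, |F_k| cannot tend to infinity:
   dividing by |F_k| would produce a unit vector in the kernel of the pseudo-coderivative in
   direction (u, 0).  So a further subsequence has V_k -> alpha e and F_k -> y' with |e| = 1, and
   since the directions of y_k - yb and lam_k merge, y' = |y'| e.  Either way the hypothesis
   places x* in the image of the limiting coderivative. *)

lemma tendsto_at_top_or_bounded_subseq:
  fixes g :: "nat \<Rightarrow> real"
  obtains "filterlim g at_top sequentially"
  | B and r :: "nat \<Rightarrow> nat" where "strict_mono r" "\<And>n. g (r n) \<le> B"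
proof (cases "\<exists>B. infinite {k. g k \<le> B}")
  case True
  then obtain B where "infinite {k. g k \<le> B}" by blast
  then show ?thesis
    using that(2)[of "enumerate {k. g k \<le> B}" B] strict_mono_enumerate enumerate_in_set by blast
next
  case False
  have "eventually (\<lambda>k. B \<le> g k) sequentially" for B
  proof -
    have "finite {k. g k \<le> B}" using False by blast
    then have "eventually (\<lambda>k. k \<notin> {k. g k \<le> B}) sequentially"
      by (simp add: eventually_cofinite cofinite_eq_sequentially[symmetric])
    then show ?thesis by eventually_elim simp
  qed
  then show ?thesis using that(1) by (simp add: filterlim_at_top)
qed

lemma reg_normal_scaleR:
  assumes "v \<in> reg_normal Omega z" "c \<ge> 0"
  shows "c *\<^sub>R v \<in> reg_normal Omega z"
proof (cases "c = 0")
  case True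
  with assms(1) show ?thesis by (auto simp: reg_normal_def)
next
  case False
  with assms(2) have "c > 0" by simp
  have "\<exists>d>0. \<forall>z'\<in>Omega. norm (z' - z) < d \<longrightarrow> inner (c *\<^sub>R v) (z' - z) \<le> e * norm (z' - z)"
    if "e > 0" for e
  proof -
    have "e / c > 0"
      using \<open>c > 0\<close> \<open>e > 0\<close> by simp
    with assms(1) obtain d where "d > 0"
      and d: "\<And>z'. z' \<in> Omega \<Longrightarrow> norm (z' - z) < d \<Longrightarrow> inner v (z' - z) \<le> e / c * norm (z' - z)"
      unfolding reg_normal_def by blast
    have "inner (c *\<^sub>R v) (z' - z) \<le> e * norm (z' - z)" if "z' \<in> Omega" "norm (z' - z) < d" for z'
      using mult_left_mono[OF d[OF that] less_imp_le[OF \<open>c > 0\<close>]] \<open>c > 0\<close> by simp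
    with \<open>d > 0\<close> show ?thesis by blast
  qed
  with assms(1) show ?thesis by (simp add: reg_normal_def)
qed

lemma reg_coderiv_scaleR:
  assumes "x \<in> reg_coderiv Phi a b y" "c \<ge> 0"
  shows "c *\<^sub>R x \<in> reg_coderiv Phi a b (c *\<^sub>R y)"
  using reg_normal_scaleR[OF _ assms(2), of "(x, - y)"] assms(1) by (simp add: reg_coderiv_def)

lemma pcoderivI:
  fixes xs :: "nat \<Rightarrow> 'a::euclidean_space" and vk :: "nat \<Rightarrow> 'b::euclidean_space"
  assumes "\<And>k. xs k \<noteq> xb" "xs \<longlonglongrightarrow> xb"
    and "(\<lambda>k. (1 / norm (xs k - xb)) *\<^sub>R (xs k - xb)) \<longlonglongrightarrow> u"
    and "vk \<longlonglongrightarrow> v" "xk \<longlonglongrightarrow> x" "yk \<longlonglongrightarrow> y"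
    and "\<And>k. norm (xs k - xb) powr (gam - 1) *\<^sub>R xk k
           \<in> reg_coderiv Phi (xs k) (yb + norm (xs k - xb) powr gam *\<^sub>R vk k) (yk k)"
  shows "x \<in> pcoderiv gam Phi xb yb u v y"
proof -
  have "(\<lambda>k. norm (xs k - xb)) \<longlonglongrightarrow> 0"
    using assms(2) by (simp add: LIM_zero tendsto_norm_zero_iff)
  then show ?thesis
    unfolding pcoderiv_def
    by (intro CollectI exI[of _ "\<lambda>k. (1 / norm (xs k - xb)) *\<^sub>R (xs k - xb)"] exI[of _ vk]
        exI[of _ xk] exI[of _ yk] exI[of _ "\<lambda>k. norm (xs k - xb)"]) (use assms in simp)
qed

lemma gpcoderivI:
  fixes xs :: "nat \<Rightarrow> 'a::euclidean_space" and vk :: "nat \<Rightarrow> 'b::euclidean_space"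
  assumes "\<And>k. xs k \<noteq> xb" "xs \<longlonglongrightarrow> xb"
    and "(\<lambda>k. (1 / norm (xs k - xb)) *\<^sub>R (xs k - xb)) \<longlonglongrightarrow> u"
    and "vk \<longlonglongrightarrow> v" "xk \<longlonglongrightarrow> x" "yk \<longlonglongrightarrow> y"
    and "\<And>k. norm (xs k - xb) powr (gam - 1) *\<^sub>R xk k
           \<in> reg_coderiv Phi (xs k) (yb + norm (xs k - xb) *\<^sub>R vk k) (yk k)"
  shows "x \<in> gpcoderiv gam Phi xb yb u v y"
proof -
  have "(\<lambda>k. norm (xs k - xb)) \<longlonglongrightarrow> 0"
    using assms(2) by (simp add: LIM_zero tendsto_norm_zero_iff)
  then show ?thesis
    unfolding gpcoderiv_def
    by (intro CollectI exI[of _ "\<lambda>k. (1 / norm (xs k - xb)) *\<^sub>R (xs k - xb)"] exI[of _ vk]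
        exI[of _ xk] exI[of _ yk] exI[of _ "\<lambda>k. norm (xs k - xb)"]) (use assms in simp)
qed

(* The premise of asymp_regular, minus the conditions the proof never uses:
   ys -> yb, (xs k, ys k) in gph Phi and |lam k| -> oo. *)
locale asymp_regularity_test =
  fixes Phi :: "'a::euclidean_space \<Rightarrow> 'b::euclidean_space set"
    and xb :: 'a and yb :: 'b and u :: 'a
    and xs :: "nat \<Rightarrow> 'a" and ys :: "nat \<Rightarrow> 'b" and xss :: "nat \<Rightarrow> 'a" and lam :: "nat \<Rightarrow> 'b"
    and xstar :: 'a and ystar :: 'b
  assumes base_in_graph: "(xb, yb) \<in> gph Phi"
    and base_value_missed: "\<And>k. yb \<notin> Phi (xs k)"
    and ys_ne: "\<And>k. ys k \<noteq> yb"
    and xss_reg_coderiv: "\<And>k. xss k \<in> reg_coderiv Phi (xs k) (ys k) (lam k)"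
    and xs_lim: "xs \<longlonglongrightarrow> xb"
    and xss_lim: "xss \<longlonglongrightarrow> xstar"
    and direction_lim: "(\<lambda>k. (1 / norm (xs k - xb)) *\<^sub>R (xs k - xb)) \<longlonglongrightarrow> u"
    and ys_little_o: "(\<lambda>k. (1 / norm (xs k - xb)) *\<^sub>R (ys k - yb)) \<longlonglongrightarrow> 0"
    and lam_aligned: "(\<lambda>k. (1 / norm (ys k - yb)) *\<^sub>R (ys k - yb) - (1 / norm (lam k)) *\<^sub>R lam k) \<longlonglongrightarrow> 0"
    and ystar_lim: "(\<lambda>k. (norm (ys k - yb) / norm (xs k - xb)) *\<^sub>R lam k) \<longlonglongrightarrow> ystar"
begin

definition \<tau> :: "nat \<Rightarrow> real" where "\<tau> k = norm (xs k - xb)"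
definition E :: "nat \<Rightarrow> 'b" where "E k = (1 / norm (ys k - yb)) *\<^sub>R (ys k - yb)"
definition W :: "nat \<Rightarrow> 'b" where "W k = (1 / norm (lam k)) *\<^sub>R lam k"
definition Z :: "nat \<Rightarrow> 'b" where "Z k = (1 / \<tau> k) *\<^sub>R (ys k - yb)"

lemma xs_ne: "xs k \<noteq> xb"
  using base_in_graph base_value_missed by (auto simp: gph_def)

lemma tau_pos: "\<tau> k > 0"
  using xs_ne by (simp add: \<tau>_def)

lemma ys_eq_Z: "ys k = yb + \<tau> k *\<^sub>R Z k"
  using tau_pos[of k] by (simp add: Z_def)

lemma norm_E: "norm (E k) = 1"
  using ys_ne[of k] by (simp add: E_def)

lemma Z_lim: "Z \<longlonglongrightarrow> 0"
  using ys_little_o unfolding Z_def[abs_def] \<tau>_def .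

lemma E_minus_W_lim: "(\<lambda>k. E k - W k) \<longlonglongrightarrow> 0"
  using lam_aligned by (simp add: E_def W_def)

lemma xs_subseq:
  assumes "strict_mono r"
  shows "(\<lambda>n. xs (r n)) \<longlonglongrightarrow> xb"
    and "(\<lambda>n. (1 / norm (xs (r n) - xb)) *\<^sub>R (xs (r n) - xb)) \<longlonglongrightarrow> u"
  using LIMSEQ_subseq_LIMSEQ[OF xs_lim assms] LIMSEQ_subseq_LIMSEQ[OF direction_lim assms]
  by (simp_all add: o_def)

end

locale asymp_regularity_test_order = asymp_regularity_test +
  fixes gam :: real
begin

definition F :: "nat \<Rightarrow> 'b" where "F k = \<tau> k powr (gam - 1) *\<^sub>R lam k"
definition \<rho> :: "nat \<Rightarrow> real" where "\<rho> k = norm (F k)"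
definition V :: "nat \<Rightarrow> 'b" where "V k = (1 / \<tau> k powr gam) *\<^sub>R (ys k - yb)"
definition R :: "nat \<Rightarrow> real" where "R k = norm (V k)"

lemma ys_eq_V: "ys k = yb + \<tau> k powr gam *\<^sub>R V k"
  using tau_pos[of k] by (simp add: V_def)

lemma V_eq_R_E: "V k = R k *\<^sub>R E k"
  using ys_ne[of k] tau_pos[of k] by (simp add: R_def V_def E_def)

lemma R_pos: "R k > 0"
  using ys_ne[of k] tau_pos[of k] by (simp add: R_def V_def)

lemma F_eq_rho_W: "F k = \<rho> k *\<^sub>R W k"
  using tau_pos[of k] by (cases "lam k = 0") (simp_all add: F_def \<rho>_def W_def)

lemma R_mult_rho_lim: "(\<lambda>k. R k * \<rho> k) \<longlonglongrightarrow> norm ystar"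
proof -
  have "R k * \<rho> k = norm ((norm (ys k - yb) / norm (xs k - xb)) *\<^sub>R lam k)" for k
  proof -
    have "\<tau> k powr (gam - 1) = \<tau> k powr gam / \<tau> k"
      using tau_pos[of k] by (simp add: powr_diff)
    then show ?thesis
      using tau_pos[of k] by (simp add: R_def \<rho>_def V_def F_def \<tau>_def)
  qed
  then show ?thesis using tendsto_norm[OF ystar_lim] by simp
qed

lemma F_reg_coderiv: "\<tau> k powr (gam - 1) *\<^sub>R xss k \<in> reg_coderiv Phi (xs k) (ys k) (F k)"
  unfolding F_def by (rule reg_coderiv_scaleR[OF xss_reg_coderiv]) simp

lemma pcoderiv_along_subseq:
  assumes r: "strict_mono r"
    and "(\<lambda>n. V (r n)) \<longlonglongrightarrow> v" "(\<lambda>n. xk (r n)) \<longlonglongrightarrow> x" "(\<lambda>n. yk (r n)) \<longlonglongrightarrow> y"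
    and mem: "\<And>k. \<tau> k powr (gam - 1) *\<^sub>R xk k \<in> reg_coderiv Phi (xs k) (ys k) (yk k)"
  shows "x \<in> pcoderiv gam Phi xb yb u v y"
proof (rule pcoderivI[where xs = "\<lambda>n. xs (r n)" and vk = "\<lambda>n. V (r n)"
      and xk = "\<lambda>n. xk (r n)" and yk = "\<lambda>n. yk (r n)"])
  fix n
  show "xs (r n) \<noteq> xb"
    by (rule xs_ne)
  show "norm (xs (r n) - xb) powr (gam - 1) *\<^sub>R xk (r n)
      \<in> reg_coderiv Phi (xs (r n)) (yb + norm (xs (r n) - xb) powr gam *\<^sub>R V (r n)) (yk (r n))"
    using mem[of "r n"] unfolding ys_eq_V[of "r n"] \<tau>_def .
qed (use xs_subseq[OF r] assms(2-4) in auto)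

lemma gpcoderiv_along_subseq:
  assumes r: "strict_mono r"
    and "(\<lambda>n. xk (r n)) \<longlonglongrightarrow> x" "(\<lambda>n. yk (r n)) \<longlonglongrightarrow> y"
    and mem: "\<And>k. \<tau> k powr (gam - 1) *\<^sub>R xk k \<in> reg_coderiv Phi (xs k) (ys k) (yk k)"
  shows "x \<in> gpcoderiv gam Phi xb yb u 0 y"
proof (rule gpcoderivI[where xs = "\<lambda>n. xs (r n)" and vk = "\<lambda>n. Z (r n)"
      and xk = "\<lambda>n. xk (r n)" and yk = "\<lambda>n. yk (r n)"])
  show "(\<lambda>n. Z (r n)) \<longlonglongrightarrow> 0"
    using LIMSEQ_subseq_LIMSEQ[OF Z_lim r] by (simp add: o_def)
  fix n
  show "xs (r n) \<noteq> xb"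
    by (rule xs_ne)
  show "norm (xs (r n) - xb) powr (gam - 1) *\<^sub>R xk (r n)
      \<in> reg_coderiv Phi (xs (r n)) (yb + norm (xs (r n) - xb) *\<^sub>R Z (r n)) (yk (r n))"
    using mem[of "r n"] unfolding ys_eq_Z[of "r n"] \<tau>_def .
qed (use xs_subseq[OF r] assms(2,3) in auto)

lemma gpcoderiv_zero_if_R_unbounded:
  assumes "filterlim R at_top sequentially"
  shows "xstar \<in> gpcoderiv gam Phi xb yb u 0 0"
proof -
  have "(\<lambda>k. R k * \<rho> k * inverse (R k)) \<longlonglongrightarrow> norm ystar * 0"
    by (intro tendsto_mult R_mult_rho_lim tendsto_inverse_0_at_top assms)
  moreover have "R k * \<rho> k * inverse (R k) = \<rho> k" for k
    using R_pos[of k] by simp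
  ultimately have "\<rho> \<longlonglongrightarrow> 0"
    by simp
  then have "F \<longlonglongrightarrow> 0"
    by (simp add: \<rho>_def[abs_def] tendsto_norm_zero_iff)
  then show ?thesis
    using gpcoderiv_along_subseq[of id xss xstar F 0] xss_lim F_reg_coderiv by (simp add: strict_mono_id)
qed

lemma V_subseq_lim_zero:
  assumes s: "strict_mono s" and rho_s: "filterlim (\<lambda>n. \<rho> (s n)) at_top sequentially"
  shows "(\<lambda>n. V (s n)) \<longlonglongrightarrow> 0"
proof -
  have "(\<lambda>n. R (s n) * \<rho> (s n) * inverse (\<rho> (s n))) \<longlonglongrightarrow> norm ystar * 0"
    by (intro tendsto_mult tendsto_inverse_0_at_top rho_s
        LIMSEQ_subseq_LIMSEQ[OF R_mult_rho_lim s, unfolded o_def])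
  moreover have "eventually (\<lambda>n. R (s n) * \<rho> (s n) * inverse (\<rho> (s n)) = R (s n)) sequentially"
    using rho_s[unfolded filterlim_at_top_dense, rule_format, of 0] by eventually_elim simp
  ultimately have "(\<lambda>n. R (s n)) \<longlonglongrightarrow> 0"
    using Lim_transform_eventually by fastforce
  then show ?thesis
    by (simp add: R_def tendsto_norm_zero_iff)
qed

lemma F_subseq_lim_aligned:
  assumes s: "strict_mono s"
    and F_lim: "(\<lambda>n. F (s n)) \<longlonglongrightarrow> y'" and E_lim: "(\<lambda>n. E (s n)) \<longlonglongrightarrow> e"
  shows "(\<lambda>n. F (s n)) \<longlonglongrightarrow> norm y' *\<^sub>R e"
proof -
  have "(\<lambda>n. E (s n) - (E (s n) - W (s n))) \<longlonglongrightarrow> e - 0"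
    using tendsto_diff[OF E_lim LIMSEQ_subseq_LIMSEQ[OF E_minus_W_lim s, unfolded o_def]] .
  then have "(\<lambda>n. W (s n)) \<longlonglongrightarrow> e"
    by simp
  then have "(\<lambda>n. norm (F (s n)) *\<^sub>R W (s n)) \<longlonglongrightarrow> norm y' *\<^sub>R e"
    by (rule tendsto_scaleR[OF tendsto_norm[OF F_lim]])
  then show ?thesis
    by (simp only: \<rho>_def[symmetric] F_eq_rho_W[symmetric])
qed

lemma rho_subseq_not_to_infinity:
  assumes ker: "ker_sv (pcoderiv gam Phi xb yb u 0) \<subseteq> {0}"
    and r: "strict_mono r"
  shows "\<not> filterlim (\<lambda>n. \<rho> (r n)) at_top sequentially"
proof
  assume "filterlim (\<lambda>n. \<rho> (r n)) at_top sequentially"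
  define D where "D k = (1 / \<rho> k) *\<^sub>R F k" for k
  have "bounded (range (\<lambda>n. D (r n)))"
    by (rule boundedI[of _ 1]) (auto simp: D_def \<rho>_def)
  then obtain q l where q: "strict_mono q" and D_lim: "(\<lambda>n. D (r (q n))) \<longlonglongrightarrow> l"
    using bounded_imp_convergent_subsequence unfolding o_def by blast
  define s where "s = r \<circ> q"
  have s: "strict_mono s"
    unfolding s_def using r q by (rule strict_mono_o)
  have rho_s: "filterlim (\<lambda>n. \<rho> (s n)) at_top sequentially"
    unfolding s_def o_def
    by (rule filterlim_compose[OF \<open>filterlim (\<lambda>n. \<rho> (r n)) at_top sequentially\<close> filterlim_subseq[OF q]])
  then have inv_rho_s: "(\<lambda>n. inverse (\<rho> (s n))) \<longlonglongrightarrow> 0"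
    by (rule tendsto_inverse_0_at_top)
  have "(\<lambda>n. V (s n)) \<longlonglongrightarrow> 0"
    using V_subseq_lim_zero[OF s rho_s] .
  moreover have "(\<lambda>n. (1 / \<rho> (s n)) *\<^sub>R xss (s n)) \<longlonglongrightarrow> 0 *\<^sub>R xstar"
    using tendsto_scaleR[OF inv_rho_s LIMSEQ_subseq_LIMSEQ[OF xss_lim s, unfolded o_def]]
    by (simp add: divide_inverse)
  moreover have "\<tau> k powr (gam - 1) *\<^sub>R ((1 / \<rho> k) *\<^sub>R xss k) \<in> reg_coderiv Phi (xs k) (ys k) (D k)" for k
    using reg_coderiv_scaleR[OF F_reg_coderiv, of "1 / \<rho> k" k] by (simp add: D_def \<rho>_def mult.commute)
  ultimately have "0 \<in> pcoderiv gam Phi xb yb u 0 l"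
    using pcoderiv_along_subseq[OF s] D_lim unfolding s_def o_def by auto
  with ker have "l = 0"
    by (auto simp: ker_sv_def)
  moreover have "(\<lambda>n. norm (D (s n))) \<longlonglongrightarrow> 1"
  proof (rule Lim_transform_eventually[OF tendsto_const])
    show "eventually (\<lambda>n. 1 = norm (D (s n))) sequentially"
      using rho_s[unfolded filterlim_at_top_dense, rule_format, of 0]
      by eventually_elim (simp add: D_def \<rho>_def)
  qed
  ultimately show False
    using tendsto_norm[OF D_lim] LIMSEQ_unique unfolding s_def o_def by force
qed

lemma limit_point_if_bounded:
  fixes r :: "nat \<Rightarrow> nat"
  assumes r: "strict_mono r" and R_bound: "\<And>n. R (r n) \<le> B" and rho_bound: "\<And>n. \<rho> (r n) \<le> C"
  obtains \<alpha> e y' where "\<alpha> \<ge> 0" "e \<in> sphere 0 1"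
    and "xstar \<in> pcoderiv gam Phi xb yb u (\<alpha> *\<^sub>R e) (norm y' *\<^sub>R e)"
    and "xstar \<in> gpcoderiv gam Phi xb yb u 0 y'"
proof -
  have "range (\<lambda>n. (F (r n), E (r n), R (r n))) \<subseteq> cball 0 C \<times> cball 0 1 \<times> cball 0 B"
    using rho_bound R_bound by (auto simp: \<rho>_def norm_E abs_of_pos R_pos)
  moreover have "bounded (cball (0::'b) C \<times> cball (0::'b) 1 \<times> cball (0::real) B)"
    by (intro bounded_Times bounded_cball)
  ultimately have bdd: "bounded (range (\<lambda>n. (F (r n), E (r n), R (r n))))"
    by (rule bounded_subset[rotated])
  obtain q T where q: "strict_mono q" and "(\<lambda>n. (F (r (q n)), E (r (q n)), R (r (q n)))) \<longlonglongrightarrow> T"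
    using bounded_imp_convergent_subsequence[OF bdd] unfolding o_def by blast
  moreover obtain y' e \<alpha> where "T = (y', e, \<alpha>)"
    by (rule prod_cases3)
  ultimately have lim: "(\<lambda>n. (F (r (q n)), E (r (q n)), R (r (q n)))) \<longlonglongrightarrow> (y', e, \<alpha>)"
    by simp
  define s where "s = r \<circ> q"
  have s: "strict_mono s"
    unfolding s_def using r q by (rule strict_mono_o)
  have F_lim: "(\<lambda>n. F (s n)) \<longlonglongrightarrow> y'" and E_lim: "(\<lambda>n. E (s n)) \<longlonglongrightarrow> e"
    and R_lim: "(\<lambda>n. R (s n)) \<longlonglongrightarrow> \<alpha>"
    using tendsto_fst[OF lim] tendsto_fst[OF tendsto_snd[OF lim]] tendsto_snd[OF tendsto_snd[OF lim]]
    by (simp_all add: s_def)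
  have xss_lim_s: "(\<lambda>n. xss (s n)) \<longlonglongrightarrow> xstar"
    using LIMSEQ_subseq_LIMSEQ[OF xss_lim s] by (simp add: o_def)
  have "(\<lambda>n. V (s n)) \<longlonglongrightarrow> \<alpha> *\<^sub>R e"
    using tendsto_scaleR[OF R_lim E_lim] by (simp add: V_eq_R_E)
  moreover have "(\<lambda>n. F (s n)) \<longlonglongrightarrow> norm y' *\<^sub>R e"
    using F_subseq_lim_aligned[OF s F_lim E_lim] .
  ultimately have "xstar \<in> pcoderiv gam Phi xb yb u (\<alpha> *\<^sub>R e) (norm y' *\<^sub>R e)"
    using pcoderiv_along_subseq[OF s _ xss_lim_s _ F_reg_coderiv] by blast
  moreover have "xstar \<in> gpcoderiv gam Phi xb yb u 0 y'"
    using gpcoderiv_along_subseq[OF s xss_lim_s F_lim F_reg_coderiv] .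
  moreover have "\<alpha> \<ge> 0"
    using R_lim by (rule LIMSEQ_le_const) (simp add: R_pos less_imp_le)
  moreover have "e \<in> sphere 0 1"
    using tendsto_norm[OF E_lim] by (simp add: norm_E LIMSEQ_const_iff)
  ultimately show thesis
    using that by blast
qed

lemma limit_point_if_R_bounded:
  fixes r :: "nat \<Rightarrow> nat"
  assumes ker: "ker_sv (pcoderiv gam Phi xb yb u 0) \<subseteq> {0}"
    and r: "strict_mono r" and R_bound: "\<And>n. R (r n) \<le> B"
  obtains \<alpha> e y' where "\<alpha> \<ge> 0" "e \<in> sphere 0 1"
    and "xstar \<in> pcoderiv gam Phi xb yb u (\<alpha> *\<^sub>R e) (norm y' *\<^sub>R e)"
    and "xstar \<in> gpcoderiv gam Phi xb yb u 0 y'"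
proof (rule tendsto_at_top_or_bounded_subseq[of "\<lambda>n. \<rho> (r n)"])
  show "filterlim (\<lambda>n. \<rho> (r n)) at_top sequentially \<Longrightarrow> thesis"
    using rho_subseq_not_to_infinity[OF ker r] by blast
  fix C and q :: "nat \<Rightarrow> nat"
  assume q: "strict_mono q" and rho_bound: "\<And>n. \<rho> (r (q n)) \<le> C"
  show thesis
  proof (rule limit_point_if_bounded[of "r \<circ> q" B C])
    show "strict_mono (r \<circ> q)"
      using r q by (rule strict_mono_o)
  qed (use R_bound rho_bound that in auto)
qed

lemma xstar_dichotomy:
  assumes ker: "ker_sv (pcoderiv gam Phi xb yb u 0) \<subseteq> {0}"
  shows "xstar \<in> gpcoderiv gam Phi xb yb u 0 0 \<or>
    (\<exists>\<alpha> \<beta> e y'. \<alpha> \<ge> 0 \<and> \<beta> \<ge> 0 \<and> e \<in> sphere 0 1 \<and>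
      xstar \<in> pcoderiv gam Phi xb yb u (\<alpha> *\<^sub>R e) (\<beta> *\<^sub>R e) \<and>
      xstar \<in> gpcoderiv gam Phi xb yb u 0 y')"
proof (rule tendsto_at_top_or_bounded_subseq[of R])
  assume "filterlim R at_top sequentially"
  then show ?thesis
    using gpcoderiv_zero_if_R_unbounded by blast
next
  fix B and r :: "nat \<Rightarrow> nat"
  assume "strict_mono r" "\<And>n. R (r n) \<le> B"
  then show ?thesis
    using limit_point_if_R_bounded[OF ker] norm_ge_zero by metis
qed

end

lemma asymp_regularI:
  assumes "(xb, yb) \<in> gph Phi"
    and "\<And>xs ys xss lam xstar ystar. asymp_regularity_test Phi xb yb u xs ys xss lam xstar ystar
           \<Longrightarrow> xstar \<in> Im_sv (lim_coderiv Phi xb yb)"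
  shows "asymp_regular Phi xb yb u"
  unfolding asymp_regular_def
  apply (intro allI impI)
  subgoal for xs ys xss lam xstar ystar
    using assms(1) by (intro assms(2)[of xs ys xss lam xstar ystar]) (simp add: asymp_regularity_test_def)
  done

theorem mainTheorem10:
  fixes Phi :: "'a::euclidean_space \<Rightarrow> 'b::euclidean_space set"
    and xb :: 'a and yb :: 'b and u :: 'a and gam :: real
  assumes "closed (gph Phi)"
    and "(xb, yb) \<in> gph Phi"
    and "norm u = 1"
    and "gam > 1"
    and "ker_sv (pcoderiv gam Phi xb yb u 0) = {0}"
    and "(\<forall>\<alpha> \<beta>. \<alpha> \<ge> 0 \<longrightarrow> \<beta> \<ge> 0 \<longrightarrow>
            gpcoderiv gam Phi xb yb u 0 0 \<union>
            (\<Union>v\<in>sphere 0 1. pcoderiv gam Phi xb yb u (\<alpha> *\<^sub>R v) (\<beta> *\<^sub>R v))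
            \<subseteq> Im_sv (lim_coderiv Phi xb yb))
         \<or> Im_sv (gpcoderiv gam Phi xb yb u 0) \<subseteq> Im_sv (lim_coderiv Phi xb yb)"
  shows "asymp_regular Phi xb yb u"
proof (rule asymp_regularI[OF assms(2)])
  fix xs ys xss lam xstar ystar
  assume "asymp_regularity_test Phi xb yb u xs ys xss lam xstar ystar"
  then interpret asymp_regularity_test_order Phi xb yb u xs ys xss lam xstar ystar gam
    by (rule asymp_regularity_test_order.intro)
  from xstar_dichotomy[OF equalityD1[OF assms(5)]] assms(6)
  show "xstar \<in> Im_sv (lim_coderiv Phi xb yb)"
    unfolding Im_sv_def by blast
qed

end
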